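(* Let $\mathbb{F}$ be any field and $d\ge 1$. Suppose $T,A\in GL(d,\mathbb{F})$ commute, and that $T$ is conjugate in $GL(d,\mathbb{F})$ to $TA$ and also to $TA^2$. Then every eigenvalue of $A$ (in an algebraic closure of $\mathbb{F}$) is a root of unity. *)

theory Defs
  imports "Jordan_Normal_Form.Jordan_Normal_Form" "HOL-Algebra.Algebraic_Closure_Type"
begin
end

theory Submission
  imports Defs "Jordan_Normal_Form.Schur_Decomposition" "Jordan_Normal_Form.DL_Rank"
begin

text \<open>Over the algebraic closure the commuting matrices \<open>T\<close> and \<open>A\<close> can be triangularized
  simultaneously, which pairs their eigenvalues as \<open>(a\<^sub>i, b\<^sub>i)\<close> so that \<open>T A\<^sup>k\<close> has the
  eigenvalues \<open>a\<^sub>i b\<^sub>i\<^sup>k\<close>. Similarity of \<open>T\<close> to \<open>T A\<close> and to \<open>T A\<^sup>2\<close> then says that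
  multiplying by \<open>b\<^sub>i\<close>, and by \<open>b\<^sub>i\<^sup>2\<close>, permutes the multiset of the \<open>a\<^sub>i\<close>. For every additive
  character \<open>u\<close> of the group generated by the \<open>a\<^sub>i, b\<^sub>i\<close> the three sums
  \<open>\<Sum> u(a\<^sub>i)\<^sup>2\<close>, \<open>\<Sum> (u(a\<^sub>i) + u(b\<^sub>i))\<^sup>2\<close> and \<open>\<Sum> (u(a\<^sub>i) + 2 u(b\<^sub>i))\<^sup>2\<close> therefore agree,
  which forces \<open>\<Sum> u(b\<^sub>i)\<^sup>2 = 0\<close>. A \<open>b\<^sub>i\<close> that is not a root of unity would be detected by
  such a character, obtained from an integral functional vanishing on the exponent vectors of
  the relations \<open>a\<^sub>p\<^sub>(\<^sub>i\<^sub>) = a\<^sub>i b\<^sub>i\<close> and \<open>a\<^sub>q\<^sub>(\<^sub>i\<^sub>) = a\<^sub>i b\<^sub>i\<^sup>2\<close>.\<close>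

definition first_col_zero_below :: "'a::zero mat \<Rightarrow> bool" where
  "first_col_zero_below A \<longleftrightarrow> (\<forall>i. 0 < i \<and> i < dim_row A \<longrightarrow> A $$ (i, 0) = 0)"

lemma mat_delete_00_index:
  assumes "A \<in> carrier_mat (Suc m) (Suc n)" "i < m" "j < n"
  shows "mat_delete A 0 0 $$ (i, j) = A $$ (Suc i, Suc j)"
  using assms by (simp add: mat_delete_def)

lemma mat_delete_00_carrier:
  "A \<in> carrier_mat (Suc m) (Suc n) \<Longrightarrow> mat_delete A 0 0 \<in> carrier_mat m n"
  using mat_delete_carrier[of A "Suc m" "Suc n" 0 0] by simp

lemma sum_lessThan_Suc_split_first:
  "(\<Sum>l\<in>{0..<Suc m}. f l) = f 0 + (\<Sum>l<m. f (Suc l))"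
  by (subst sum.atLeast0_lessThan_Suc_shift) (simp add: atLeast0LessThan)

lemma mult_mat_index_split_first:
  fixes A B :: "'a::semiring_0 mat"
  assumes "A \<in> carrier_mat k (Suc m)" "B \<in> carrier_mat (Suc m) l" "i < k" "j < l"
  shows "(A * B) $$ (i, j) = A $$ (i, 0) * B $$ (0, j) + (\<Sum>t<m. A $$ (i, Suc t) * B $$ (Suc t, j))"
  using assms by (simp add: scalar_prod_def sum_lessThan_Suc_split_first del: sum.op_ivl_Suc)

lemma mult_mat_vec_index_split_first:
  fixes A :: "'a::semiring_0 mat"
  assumes "A \<in> carrier_mat k (Suc m)" "y \<in> carrier_vec (Suc m)" "i < k"
  shows "(A *\<^sub>v y) $ i = A $$ (i, 0) * y $ 0 + (\<Sum>t<m. A $$ (i, Suc t) * y $ Suc t)"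
  using assms by (simp add: scalar_prod_def sum_lessThan_Suc_split_first del: sum.op_ivl_Suc)

lemma first_col_zero_below_mult:
  fixes A B :: "'a::semiring_0 mat"
  assumes A: "A \<in> carrier_mat (Suc m) (Suc m)" and B: "B \<in> carrier_mat (Suc m) (Suc m)"
    and zA: "first_col_zero_below A" and zB: "first_col_zero_below B"
  shows "first_col_zero_below (A * B)"
    and "(A * B) $$ (0, 0) = A $$ (0, 0) * B $$ (0, 0)"
    and "mat_delete (A * B) 0 0 = mat_delete A 0 0 * mat_delete B 0 0"
proof -
  have a: "A $$ (i, 0) = 0" and b: "B $$ (i, 0) = 0" if "0 < i" "i < Suc m" for i
    using zA zB A B that unfolding first_col_zero_below_def by auto
  show "first_col_zero_below (A * B)"
    unfolding first_col_zero_below_def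
  proof (intro allI impI)
    fix i assume "0 < i \<and> i < dim_row (A * B)"
    then show "(A * B) $$ (i, 0) = 0"
      using A by (simp add: mult_mat_index_split_first[OF A B] a b)
  qed
  show "(A * B) $$ (0, 0) = A $$ (0, 0) * B $$ (0, 0)"
    by (simp add: mult_mat_index_split_first[OF A B] b)
  show "mat_delete (A * B) 0 0 = mat_delete A 0 0 * mat_delete B 0 0"
  proof (rule eq_matI)
    fix i j assume "i < dim_row (mat_delete A 0 0 * mat_delete B 0 0)"
      "j < dim_col (mat_delete A 0 0 * mat_delete B 0 0)"
    then have ij: "i < m" "j < m" using A B by auto
    have "mat_delete (A * B) 0 0 $$ (i, j) = (A * B) $$ (Suc i, Suc j)"
      using A B ij by (simp add: mat_delete_00_index[of _ m m])
    also have "\<dots> = (\<Sum>t<m. A $$ (Suc i, Suc t) * B $$ (Suc t, Suc j))"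
      by (subst mult_mat_index_split_first[OF A B]) (use ij a in auto)
    also have "\<dots> = (mat_delete A 0 0 * mat_delete B 0 0) $$ (i, j)"
      using A B ij mat_delete_00_carrier[OF A] mat_delete_00_carrier[OF B]
      by (simp add: scalar_prod_def mat_delete_00_index[of _ m m] atLeast0LessThan)
    finally show "mat_delete (A * B) 0 0 $$ (i, j) = (mat_delete A 0 0 * mat_delete B 0 0) $$ (i, j)" .
  qed (use A B in auto)
qed

lemma first_col_zero_below_pow:
  fixes A :: "'a::comm_semiring_1 mat"
  assumes A: "A \<in> carrier_mat (Suc m) (Suc m)" and zA: "first_col_zero_below A"
  shows "first_col_zero_below (A ^\<^sub>m k) \<and> (A ^\<^sub>m k) $$ (0, 0) = A $$ (0, 0) ^ k
    \<and> mat_delete (A ^\<^sub>m k) 0 0 = mat_delete A 0 0 ^\<^sub>m k"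
proof (induction k)
  case 0
  have "mat_delete (1\<^sub>m (Suc m)) 0 0 = (1\<^sub>m m :: 'a mat)"
    by (rule eq_matI) (auto simp: mat_delete_def)
  then show ?case using A by (simp add: first_col_zero_below_def)
next
  case (Suc k)
  have "A ^\<^sub>m k \<in> carrier_mat (Suc m) (Suc m)" using A by simp
  with Suc zA show ?case
    using first_col_zero_below_mult[OF _ A] by (simp add: mult.commute)
qed

lemma char_poly_first_col_zero_below:
  fixes A :: "'a::comm_ring_1 mat"
  assumes A: "A \<in> carrier_mat (Suc m) (Suc m)" and zA: "first_col_zero_below A"
  shows "char_poly A = [:- A $$ (0, 0), 1:] * char_poly (mat_delete A 0 0)"
proof -
  let ?a = "mat 1 1 (\<lambda>_. A $$ (0, 0))"
  let ?b = "mat 1 m (\<lambda>(_, j). A $$ (0, Suc j))"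
  note D = mat_delete_00_carrier[OF A]
  have blocks: "A = four_block_mat ?a ?b (0\<^sub>m m 1) (mat_delete A 0 0)"
    using A D zA unfolding first_col_zero_below_def
    by (intro eq_matI) (auto simp: mat_delete_00_index less_Suc_eq_0_disj)
  have "char_poly ?a = [:- A $$ (0, 0), 1:]"
    by (subst char_poly_upper_triangular[of _ 1]) (auto simp: upper_triangular_def diag_mat_def)
  then show ?thesis
    by (subst blocks, subst char_poly_four_block_zeros_col) (use D in auto)
qed

lemma char_poly_pow_mult_first_col_zero_below:
  fixes S B :: "'a::comm_ring_1 mat"
  assumes S: "S \<in> carrier_mat (Suc m) (Suc m)" and B: "B \<in> carrier_mat (Suc m) (Suc m)"
    and zS: "first_col_zero_below S" and zB: "first_col_zero_below B"
  shows "char_poly (S ^\<^sub>m j * B ^\<^sub>m k) = [:- (S $$ (0, 0) ^ j * B $$ (0, 0) ^ k), 1:]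
    * char_poly (mat_delete S 0 0 ^\<^sub>m j * mat_delete B 0 0 ^\<^sub>m k)"
proof -
  have Sj: "S ^\<^sub>m j \<in> carrier_mat (Suc m) (Suc m)" and Bk: "B ^\<^sub>m k \<in> carrier_mat (Suc m) (Suc m)"
    using S B by auto
  note pS = first_col_zero_below_pow[OF S zS, of j] and pB = first_col_zero_below_pow[OF B zB, of k]
  show ?thesis
    using char_poly_first_col_zero_below[OF mult_carrier_mat[OF Sj Bk]]
      first_col_zero_below_mult[OF Sj Bk] pS pB by simp
qed

lemma first_col_zero_below_unit_vec:
  fixes B :: "'a::semiring_1 mat"
  assumes B: "B \<in> carrier_mat n n" and zB: "first_col_zero_below B" and n: "0 < n"
  shows "B *\<^sub>v unit_vec n 0 = B $$ (0, 0) \<cdot>\<^sub>v unit_vec n 0"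
  using B zB n unfolding first_col_zero_below_def
  by (intro eq_vecI) (auto simp: scalar_prod_right_unit)

lemma inverse_pair_with_first_col:
  fixes v :: "'a::field vec"
  assumes v: "v \<in> carrier_vec n" and v0: "v \<noteq> 0\<^sub>v n"
  obtains P Q where "P \<in> carrier_mat n n" "Q \<in> carrier_mat n n"
    "P * Q = 1\<^sub>m n" "Q * P = 1\<^sub>m n" "col P 0 = v"
proof -
  let ?b = "basis_completion v"
  note bc = vec_space.basis_completion[OF v v0]
  define P where "P = mat_of_cols n ?b"
  have P: "P \<in> carrier_mat n n" unfolding P_def using bc by auto
  have cols: "cols P = ?b" unfolding P_def using bc by (intro cols_mat_of_cols) auto
  have "vec_space.rank n P = n"
    by (rule vec_space.lin_indpt_full_rank[OF P]) (use bc cols in auto)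
  then have "det P \<noteq> 0" using vec_space.det_rank_iff[OF P] by auto
  from det_non_zero_imp_unit[OF P this, of undefined]
  obtain Q where Q: "Q \<in> carrier_mat n n" "P * Q = 1\<^sub>m n" "Q * P = 1\<^sub>m n"
    unfolding Units_def ring_mat_def by auto
  have "0 < n" using v v0 by (cases n) auto
  then have "col P 0 = v"
    using cols P bc by (metis carrier_matD(2) cols_nth hd_conv_nth list.size(3) less_not_refl)
  with P Q that show ?thesis by blast
qed

lemma similar_mat_wit_conj:
  assumes P: "P \<in> carrier_mat n n" and Q: "Q \<in> carrier_mat n n"
    and PQ: "P * Q = 1\<^sub>m n" and QP: "Q * P = 1\<^sub>m n" and A: "A \<in> carrier_mat n n"
  shows "similar_mat_wit A (Q * A * P) P Q"
proof (rule similar_mat_witI[OF PQ QP _ A _ P Q])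
  have "P * (Q * A * P) * Q = (P * Q) * A * (P * Q)"
    using P Q A by (simp add: assoc_mult_mat[of _ n n _ n _ n])
  then show "A = P * (Q * A * P) * Q" using A PQ by simp
qed (use P Q A in auto)

lemma similar_mat_wit_mult:
  assumes AA': "similar_mat_wit A A' P Q" and BB': "similar_mat_wit B B' P Q"
  shows "similar_mat_wit (A * B) (A' * B') P Q"
proof -
  define n where "n = dim_row A"
  note a = similar_mat_witD[OF n_def AA']
  have "dim_row B = n" using similar_mat_witD(6)[OF refl BB'] a(6) by (metis carrier_matD(1))
  note b = similar_mat_witD[OF this[symmetric] BB']
  have "A * B = P * (A' * (Q * P) * B') * Q"
    unfolding a(3) b(3) using a(5-7) b(5) by (simp add: assoc_mult_mat[of _ n n _ n _ n])
  also have "\<dots> = P * (A' * B') * Q"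
    using a(2,5) b(5) by simp
  finally show ?thesis
    by (rule similar_mat_witI[OF a(1,2) _ mult_carrier_mat[OF a(4) b(4)]
          mult_carrier_mat[OF a(5) b(5)] a(6,7)])
qed

lemma first_col_zero_below_conj_eigenvector:
  fixes B :: "'a::field mat"
  assumes P: "P \<in> carrier_mat n n" and Q: "Q \<in> carrier_mat n n" and QP: "Q * P = 1\<^sub>m n"
    and B: "B \<in> carrier_mat n n" and v: "col P 0 = v" and ev: "B *\<^sub>v v = \<mu> \<cdot>\<^sub>v v" and n: "0 < n"
  shows "first_col_zero_below (Q * B * P)" and "(Q * B * P) $$ (0, 0) = \<mu>"
proof -
  have Pv: "v \<in> carrier_vec n" using P n v by auto
  have "col (Q * B * P) 0 = Q *\<^sub>v (B *\<^sub>v v)"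
    unfolding assoc_mult_mat[OF Q B P] col_mult2[OF Q mult_carrier_mat[OF B P] n]
      col_mult2[OF B P n] v ..
  also have "\<dots> = \<mu> \<cdot>\<^sub>v (Q *\<^sub>v col P 0)"
    unfolding ev v by (rule mult_mat_vec[OF Q Pv])
  also have "Q *\<^sub>v col P 0 = unit_vec n 0"
    using col_mult2[OF Q P n] QP n by simp
  finally have col0: "col (Q * B * P) 0 = \<mu> \<cdot>\<^sub>v unit_vec n 0" .
  have "(Q * B * P) $$ (i, 0) = (if i = 0 then \<mu> else 0)" if "i < n" for i
  proof -
    have "(Q * B * P) $$ (i, 0) = col (Q * B * P) 0 $ i" using that P Q B n by simp
    then show ?thesis unfolding col0 using that by simp
  qed
  then show "first_col_zero_below (Q * B * P)" "(Q * B * P) $$ (0, 0) = \<mu>"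
    using Q n unfolding first_col_zero_below_def by auto
qed

fun apply_shifts :: "'a::comm_ring_1 mat \<Rightarrow> 'a list \<Rightarrow> 'a vec \<Rightarrow> 'a vec" where
  "apply_shifts B [] x = x"
| "apply_shifts B (d # ds) x = apply_shifts B ds (B *\<^sub>v x - d \<cdot>\<^sub>v x)"

lemma apply_shifts_append:
  "apply_shifts B (xs @ ys) x = apply_shifts B ys (apply_shifts B xs x)"
  by (induction xs arbitrary: x) auto

lemma apply_shifts_carrier:
  "B \<in> carrier_mat n n \<Longrightarrow> x \<in> carrier_vec n \<Longrightarrow> apply_shifts B ds x \<in> carrier_vec n"
  by (induction ds arbitrary: x) auto

lemma apply_shifts_similar:
  fixes B :: "'a::field mat"
  assumes BB': "similar_mat_wit B B' P Q" and B: "B \<in> carrier_mat n n" and y: "y \<in> carrier_vec n"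
  shows "apply_shifts B ds (P *\<^sub>v y) = P *\<^sub>v apply_shifts B' ds y"
  using y
proof (induction ds arbitrary: y)
  case (Cons d ds)
  note w = similar_mat_witD2[OF B BB']
  have "B * P = P * B' * (Q * P)"
    unfolding w(3) using w by (simp add: assoc_mult_mat[of _ n n _ n _ n])
  then have BP: "B * P = P * B'" using w by simp
  have y': "B' *\<^sub>v y \<in> carrier_vec n" "d \<cdot>\<^sub>v y \<in> carrier_vec n" using w Cons.prems by auto
  have "B *\<^sub>v (P *\<^sub>v y) = P *\<^sub>v (B' *\<^sub>v y)"
    using assoc_mult_mat_vec[OF B w(6) Cons.prems] assoc_mult_mat_vec[OF w(6,5) Cons.prems] BP by simp
  moreover have "d \<cdot>\<^sub>v (P *\<^sub>v y) = P *\<^sub>v (d \<cdot>\<^sub>v y)"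
    by (rule mult_mat_vec[OF w(6) Cons.prems, symmetric])
  ultimately have "B *\<^sub>v (P *\<^sub>v y) - d \<cdot>\<^sub>v (P *\<^sub>v y) = P *\<^sub>v (B' *\<^sub>v y - d \<cdot>\<^sub>v y)"
    using mult_minus_distrib_mat_vec[OF w(6) y'] by simp
  then show ?case
    using Cons.IH[of "B' *\<^sub>v y - d \<cdot>\<^sub>v y"] w Cons.prems by simp
qed simp

lemma vec_last_mult_first_col_zero_below:
  fixes B :: "'a::comm_ring_1 mat"
  assumes B: "B \<in> carrier_mat (Suc m) (Suc m)" and zB: "first_col_zero_below B"
    and y: "y \<in> carrier_vec (Suc m)"
  shows "vec_last (B *\<^sub>v y) m = mat_delete B 0 0 *\<^sub>v vec_last y m"
proof (rule eq_vecI)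
  fix i assume "i < dim_vec (mat_delete B 0 0 *\<^sub>v vec_last y m)"
  then have i: "i < m" using B by simp
  have "B $$ (Suc i, 0) = 0" using zB B i unfolding first_col_zero_below_def by auto
  then have "(B *\<^sub>v y) $ Suc i = (\<Sum>t<m. B $$ (Suc i, Suc t) * y $ Suc t)"
    by (subst mult_mat_vec_index_split_first[OF B y]) (use i in auto)
  then show "vec_last (B *\<^sub>v y) m $ i = (mat_delete B 0 0 *\<^sub>v vec_last y m) $ i"
    using B y i
    by (simp add: vec_last_def scalar_prod_def mat_delete_00_index[of _ m m] atLeast0LessThan)
qed (use B in simp)

lemma vec_last_apply_shifts:
  fixes B :: "'a::comm_ring_1 mat"
  assumes B: "B \<in> carrier_mat (Suc m) (Suc m)" and zB: "first_col_zero_below B"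
    and y: "y \<in> carrier_vec (Suc m)"
  shows "vec_last (apply_shifts B ds y) m = apply_shifts (mat_delete B 0 0) ds (vec_last y m)"
  using y
proof (induction ds arbitrary: y)
  case (Cons d ds)
  have "vec_last (B *\<^sub>v y - d \<cdot>\<^sub>v y) m = vec_last (B *\<^sub>v y) m - d \<cdot>\<^sub>v vec_last y m"
    using B Cons.prems by (intro eq_vecI) (auto simp: vec_last_def)
  then show ?case
    using Cons B by (simp add: vec_last_mult_first_col_zero_below[OF B zB])
qed simp

lemma vec_last_zero_imp_unit_vec:
  fixes z :: "'a::semiring_1 vec"
  assumes z: "z \<in> carrier_vec (Suc m)" and z0: "vec_last z m = 0\<^sub>v m"
  shows "z = z $ 0 \<cdot>\<^sub>v unit_vec (Suc m) 0"
proof (rule eq_vecI)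
  fix i assume "i < dim_vec (z $ 0 \<cdot>\<^sub>v unit_vec (Suc m) 0)"
  then have i: "i < Suc m" by simp
  show "z $ i = (z $ 0 \<cdot>\<^sub>v unit_vec (Suc m) 0) $ i"
  proof (cases i)
    case (Suc t)
    then have "vec_last z m $ t = z $ i" using z i by (simp add: vec_last_def)
    then show ?thesis using z0 Suc i by simp
  qed (use i in simp)
qed (use z in simp)

lemma eigenvector_exists:
  fixes B :: "'a::alg_closed_field mat"
  assumes B: "B \<in> carrier_mat n n" and n: "0 < n"
  obtains \<mu> v where "v \<in> carrier_vec n" "v \<noteq> 0\<^sub>v n" "B *\<^sub>v v = \<mu> \<cdot>\<^sub>v v"
proof -
  have "Polynomial.degree (char_poly B) > 0" using degree_monic_char_poly[OF B] n by auto
  then obtain \<mu> where "poly (char_poly B) \<mu> = 0" using alg_closed_imp_poly_has_root by blast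
  then have "eigenvalue B \<mu>" using eigenvalue_root_char_poly[OF B] by auto
  then show ?thesis using that B unfolding eigenvalue_def eigenvector_def by auto
qed

lemma apply_shifts_first_col_zero_below:
  fixes B :: "'a::field mat"
  assumes B: "B \<in> carrier_mat (Suc m) (Suc m)" and zB: "first_col_zero_below B"
    and ds: "\<forall>x \<in> carrier_vec m. apply_shifts (mat_delete B 0 0) ds x = 0\<^sub>v m"
    and y: "y \<in> carrier_vec (Suc m)"
  shows "apply_shifts B (ds @ [B $$ (0, 0)]) y = 0\<^sub>v (Suc m)"
proof -
  define z where "z = apply_shifts B ds y"
  have z: "z \<in> carrier_vec (Suc m)" unfolding z_def by (rule apply_shifts_carrier[OF B y])
  have "vec_last z m = 0\<^sub>v m"
    unfolding z_def vec_last_apply_shifts[OF B zB y] using ds by simp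
  then have z_unit: "z = z $ 0 \<cdot>\<^sub>v unit_vec (Suc m) 0" by (rule vec_last_zero_imp_unit_vec[OF z])
  have "B *\<^sub>v z = B $$ (0, 0) \<cdot>\<^sub>v z"
    by (subst (1 2) z_unit)
      (simp add: mult_mat_vec[OF B] first_col_zero_below_unit_vec[OF B zB] smult_smult_assoc mult.commute)
  then show ?thesis unfolding apply_shifts_append z_def[symmetric] using z by simp
qed

lemma annihilating_shifts_exist:
  fixes B :: "'a::alg_closed_field mat"
  assumes "B \<in> carrier_mat n n"
  shows "\<exists>ds. \<forall>x \<in> carrier_vec n. apply_shifts B ds x = 0\<^sub>v n"
  using assms
proof (induction n arbitrary: B)
  case (Suc m)
  note B = Suc.prems
  obtain \<mu> v where v: "v \<in> carrier_vec (Suc m)" "v \<noteq> 0\<^sub>v (Suc m)" "B *\<^sub>v v = \<mu> \<cdot>\<^sub>v v"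
    using eigenvector_exists[OF B] by blast
  obtain P Q where PQ: "P \<in> carrier_mat (Suc m) (Suc m)" "Q \<in> carrier_mat (Suc m) (Suc m)"
    "P * Q = 1\<^sub>m (Suc m)" "Q * P = 1\<^sub>m (Suc m)" "col P 0 = v"
    using inverse_pair_with_first_col[OF v(1,2)] by blast
  define B' where "B' = Q * B * P"
  have wit: "similar_mat_wit B B' P Q"
    unfolding B'_def by (rule similar_mat_wit_conj[OF PQ(1-4) B])
  have B': "B' \<in> carrier_mat (Suc m) (Suc m)" unfolding B'_def using PQ B by auto
  have zB: "first_col_zero_below B'"
    using first_col_zero_below_conj_eigenvector[OF PQ(1,2,4) B PQ(5) v(3)] unfolding B'_def by auto
  obtain ds where "\<forall>x \<in> carrier_vec m. apply_shifts (mat_delete B' 0 0) ds x = 0\<^sub>v m"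
    using Suc.IH[OF mat_delete_00_carrier[OF B']] by blast
  note kill = apply_shifts_first_col_zero_below[OF B' zB this]
  show ?case
  proof (intro exI[of _ "ds @ [B' $$ (0, 0)]"] ballI)
    fix x :: "'a vec" assume x: "x \<in> carrier_vec (Suc m)"
    have Qx: "Q *\<^sub>v x \<in> carrier_vec (Suc m)" using PQ x by simp
    have "x = P *\<^sub>v (Q *\<^sub>v x)"
      using PQ x by (simp add: assoc_mult_mat_vec[symmetric, of _ "Suc m" "Suc m" _ "Suc m"])
    then show "apply_shifts B (ds @ [B' $$ (0, 0)]) x = 0\<^sub>v (Suc m)"
      using apply_shifts_similar[OF wit B Qx] kill[OF Qx] PQ by auto
  qed
qed (intro exI[of _ "[]"], auto)

section \<open>Simultaneous triangularization of two commuting matrices\<close>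

lemma commuting_shift_preserves_eigenvector:
  fixes S B :: "'a::field mat"
  assumes S: "S \<in> carrier_mat n n" and B: "B \<in> carrier_mat n n" and comm: "S * B = B * S"
    and w: "w \<in> carrier_vec n" and Sw: "S *\<^sub>v w = \<alpha> \<cdot>\<^sub>v w"
  shows "S *\<^sub>v (B *\<^sub>v w - d \<cdot>\<^sub>v w) = \<alpha> \<cdot>\<^sub>v (B *\<^sub>v w - d \<cdot>\<^sub>v w)"
proof -
  have "S *\<^sub>v (B *\<^sub>v w) = B *\<^sub>v (S *\<^sub>v w)"
    using assoc_mult_mat_vec[OF S B w] assoc_mult_mat_vec[OF B S w] comm by simp
  also have "\<dots> = \<alpha> \<cdot>\<^sub>v (B *\<^sub>v w)" unfolding Sw by (rule mult_mat_vec[OF B w])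
  finally have SBw: "S *\<^sub>v (B *\<^sub>v w) = \<alpha> \<cdot>\<^sub>v (B *\<^sub>v w)" .
  have "S *\<^sub>v (d \<cdot>\<^sub>v w) = d \<cdot>\<^sub>v (\<alpha> \<cdot>\<^sub>v w)"
    unfolding Sw[symmetric] by (rule mult_mat_vec[OF S w])
  then show ?thesis
    using S B w SBw by (intro eq_vecI) (auto simp: mult_minus_distrib_mat_vec algebra_simps)
qed

lemma common_eigenvector_of_shifts:
  fixes S B :: "'a::field mat"
  assumes S: "S \<in> carrier_mat n n" and B: "B \<in> carrier_mat n n" and comm: "S * B = B * S"
    and "w \<in> carrier_vec n" "w \<noteq> 0\<^sub>v n" "S *\<^sub>v w = \<alpha> \<cdot>\<^sub>v w" "apply_shifts B ds w = 0\<^sub>v n"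
  shows "\<exists>\<beta> v. v \<in> carrier_vec n \<and> v \<noteq> 0\<^sub>v n \<and> S *\<^sub>v v = \<alpha> \<cdot>\<^sub>v v \<and> B *\<^sub>v v = \<beta> \<cdot>\<^sub>v v"
  using assms(4-7)
proof (induction ds arbitrary: w)
  case (Cons d ds)
  show ?case
  proof (cases "B *\<^sub>v w - d \<cdot>\<^sub>v w = 0\<^sub>v n")
    case True
    have "B *\<^sub>v w = d \<cdot>\<^sub>v w"
    proof (rule eq_vecI)
      fix i assume "i < dim_vec (d \<cdot>\<^sub>v w)"
      then show "(B *\<^sub>v w) $ i = (d \<cdot>\<^sub>v w) $ i"
        using arg_cong[OF True, of "\<lambda>u :: 'a vec. u $ i"] B Cons.prems(1) by auto
    qed (use B Cons.prems(1) in auto)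
    then show ?thesis using Cons.prems by blast
  next
    case False
    moreover have "B *\<^sub>v w - d \<cdot>\<^sub>v w \<in> carrier_vec n" using B Cons.prems(1) by simp
    ultimately show ?thesis
      using Cons.IH Cons.prems commuting_shift_preserves_eigenvector[OF S B comm] by simp
  qed
qed simp

lemma common_eigenvector:
  fixes S B :: "'a::alg_closed_field mat"
  assumes S: "S \<in> carrier_mat n n" and B: "B \<in> carrier_mat n n" and comm: "S * B = B * S"
    and n: "0 < n"
  obtains \<alpha> \<beta> w where "w \<in> carrier_vec n" "w \<noteq> 0\<^sub>v n" "S *\<^sub>v w = \<alpha> \<cdot>\<^sub>v w" "B *\<^sub>v w = \<beta> \<cdot>\<^sub>v w"
proof -
  obtain \<alpha> v where v: "v \<in> carrier_vec n" "v \<noteq> 0\<^sub>v n" "S *\<^sub>v v = \<alpha> \<cdot>\<^sub>v v"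
    using eigenvector_exists[OF S n] by blast
  obtain ds where "\<forall>x \<in> carrier_vec n. apply_shifts B ds x = 0\<^sub>v n"
    using annihilating_shifts_exist[OF B] by blast
  then show ?thesis
    using common_eigenvector_of_shifts[OF S B comm v] v(1) that by blast
qed

lemma commuting_deflation:
  fixes S B :: "'a::field mat"
  assumes S: "S \<in> carrier_mat (Suc m) (Suc m)" and B: "B \<in> carrier_mat (Suc m) (Suc m)"
    and comm: "S * B = B * S" and w: "w \<in> carrier_vec (Suc m)" "w \<noteq> 0\<^sub>v (Suc m)"
    and Sw: "S *\<^sub>v w = \<alpha> \<cdot>\<^sub>v w" and Bw: "B *\<^sub>v w = \<beta> \<cdot>\<^sub>v w"
  obtains S\<^sub>0 B\<^sub>0 where "S\<^sub>0 \<in> carrier_mat m m" "B\<^sub>0 \<in> carrier_mat m m" "S\<^sub>0 * B\<^sub>0 = B\<^sub>0 * S\<^sub>0"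
    "\<And>j k. char_poly (S ^\<^sub>m j * B ^\<^sub>m k)
      = [:- (\<alpha> ^ j * \<beta> ^ k), 1:] * char_poly (S\<^sub>0 ^\<^sub>m j * B\<^sub>0 ^\<^sub>m k)"
proof -
  obtain P Q where PQ: "P \<in> carrier_mat (Suc m) (Suc m)" "Q \<in> carrier_mat (Suc m) (Suc m)"
    "P * Q = 1\<^sub>m (Suc m)" "Q * P = 1\<^sub>m (Suc m)" "col P 0 = w"
    using inverse_pair_with_first_col[OF w] by blast
  define S' where "S' = Q * S * P"
  define B' where "B' = Q * B * P"
  have wS: "similar_mat_wit S S' P Q" and wB: "similar_mat_wit B B' P Q"
    unfolding S'_def B'_def using similar_mat_wit_conj[OF PQ(1-4)] S B by auto
  have S': "S' \<in> carrier_mat (Suc m) (Suc m)" and B': "B' \<in> carrier_mat (Suc m) (Suc m)"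
    unfolding S'_def B'_def using PQ S B by auto
  have zS: "first_col_zero_below S'" and cS: "S' $$ (0, 0) = \<alpha>"
    using first_col_zero_below_conj_eigenvector[OF PQ(1,2,4) S PQ(5) Sw] unfolding S'_def by auto
  have zB: "first_col_zero_below B'" and cB: "B' $$ (0, 0) = \<beta>"
    using first_col_zero_below_conj_eigenvector[OF PQ(1,2,4) B PQ(5) Bw] unfolding B'_def by auto
  have "S' * B' = Q * (S * B) * P" and "B' * S' = Q * (B * S) * P"
    using similar_mat_witD2(3)[OF mult_carrier_mat[OF S' B']
        similar_mat_wit_sym[OF similar_mat_wit_mult[OF wS wB]]]
      similar_mat_witD2(3)[OF mult_carrier_mat[OF B' S']
        similar_mat_wit_sym[OF similar_mat_wit_mult[OF wB wS]]]
    by simp_all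
  then have "S' * B' = B' * S'" using comm by simp
  then have "mat_delete S' 0 0 * mat_delete B' 0 0 = mat_delete B' 0 0 * mat_delete S' 0 0"
    using first_col_zero_below_mult(3)[OF S' B' zS zB] first_col_zero_below_mult(3)[OF B' S' zB zS]
    by simp
  moreover have "char_poly (S ^\<^sub>m j * B ^\<^sub>m k)
      = [:- (\<alpha> ^ j * \<beta> ^ k), 1:]
        * char_poly (mat_delete S' 0 0 ^\<^sub>m j * mat_delete B' 0 0 ^\<^sub>m k)" for j k
  proof -
    have "similar_mat (S ^\<^sub>m j * B ^\<^sub>m k) (S' ^\<^sub>m j * B' ^\<^sub>m k)"
      using similar_mat_wit_mult[OF similar_mat_wit_pow[OF wS] similar_mat_wit_pow[OF wB]]
      unfolding similar_mat_def by blast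
    then show ?thesis
      using char_poly_similar char_poly_pow_mult_first_col_zero_below[OF S' B' zS zB] cS cB by metis
  qed
  ultimately show ?thesis
    using that mat_delete_00_carrier[OF S'] mat_delete_00_carrier[OF B'] by blast
qed

lemma commuting_char_poly_pow_mult:
  fixes S B :: "'a::alg_closed_field mat"
  assumes "S \<in> carrier_mat n n" and "B \<in> carrier_mat n n" and "S * B = B * S"
  shows "\<exists>ps. \<forall>j k. char_poly (S ^\<^sub>m j * B ^\<^sub>m k) = (\<Prod>(\<alpha>, \<beta>)\<leftarrow>ps. [:- (\<alpha> ^ j * \<beta> ^ k), 1:])"
  using assms
proof (induction n arbitrary: S B)
  case 0
  have "char_poly (S ^\<^sub>m j * B ^\<^sub>m k) = 1" for j k
    using 0 by (subst char_poly_upper_triangular[of _ 0]) (auto simp: upper_triangular_def diag_mat_def)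
  then show ?case by (intro exI[of _ "[]"]) simp
next
  case (Suc m)
  note S = Suc.prems(1) and B = Suc.prems(2) and comm = Suc.prems(3)
  obtain \<alpha> \<beta> w where w: "w \<in> carrier_vec (Suc m)" "w \<noteq> 0\<^sub>v (Suc m)"
    "S *\<^sub>v w = \<alpha> \<cdot>\<^sub>v w" "B *\<^sub>v w = \<beta> \<cdot>\<^sub>v w"
    using common_eigenvector[OF S B comm] by blast
  obtain S\<^sub>0 B\<^sub>0 where S\<^sub>0: "S\<^sub>0 \<in> carrier_mat m m" and B\<^sub>0: "B\<^sub>0 \<in> carrier_mat m m"
    and comm\<^sub>0: "S\<^sub>0 * B\<^sub>0 = B\<^sub>0 * S\<^sub>0"
    and cp: "\<And>j k. char_poly (S ^\<^sub>m j * B ^\<^sub>m k)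
      = [:- (\<alpha> ^ j * \<beta> ^ k), 1:] * char_poly (S\<^sub>0 ^\<^sub>m j * B\<^sub>0 ^\<^sub>m k)"
    using commuting_deflation[OF S B comm w] by blast
  obtain ps where "\<And>j k. char_poly (S\<^sub>0 ^\<^sub>m j * B\<^sub>0 ^\<^sub>m k) = (\<Prod>(a, b)\<leftarrow>ps. [:- (a ^ j * b ^ k), 1:])"
    using Suc.IH[OF S\<^sub>0 B\<^sub>0 comm\<^sub>0] by blast
  then show ?case using cp by (intro exI[of _ "(\<alpha>, \<beta>) # ps"]) simp
qed

section \<open>Integer relations among nonzero field elements\<close>

definition dot_on :: "'i set \<Rightarrow> ('i \<Rightarrow> 'a::comm_semiring_0) \<Rightarrow> ('i \<Rightarrow> 'a) \<Rightarrow> 'a" where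
  "dot_on I u v = (\<Sum>i\<in>I. u i * v i)"

definition in_frac_span :: "'i set \<Rightarrow> ('i \<Rightarrow> 'a::idom) set \<Rightarrow> ('i \<Rightarrow> 'a) \<Rightarrow> bool" where
  "in_frac_span I R e \<longleftrightarrow> (\<exists>D c. D \<noteq> 0 \<and> (\<forall>i\<in>I. D * e i = (\<Sum>r\<in>R. c r * r i)))"

lemma dot_on_commute: "dot_on I u v = dot_on I v u"
  by (simp add: dot_on_def mult.commute)

lemma dot_on_diff_right:
  fixes u x y :: "'i \<Rightarrow> 'a::comm_ring"
  shows "dot_on I u (\<lambda>i. a * x i - b * y i) = a * dot_on I u x - b * dot_on I u y"
  by (simp add: dot_on_def sum_subtractf sum_distrib_left algebra_simps)

lemma dot_on_diff_left:
  fixes u x y :: "'i \<Rightarrow> 'a::comm_ring"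
  shows "dot_on I (\<lambda>i. a * x i - b * y i) v = a * dot_on I x v - b * dot_on I y v"
  using dot_on_diff_right[of I v a x b y] by (simp add: dot_on_commute)

lemma dot_on_scale_right: "dot_on I u (\<lambda>i. a * v i) = a * dot_on I u v"
  by (simp add: dot_on_def sum_distrib_left algebra_simps)

lemma dot_on_add_right: "dot_on I u (\<lambda>i. v i + w i) = dot_on I u v + dot_on I u w"
  by (simp add: dot_on_def distrib_left sum.distrib)

lemma dot_on_single:
  assumes "finite I" and "t \<in> I"
  shows "dot_on I u (\<lambda>i. if i = t then c else 0) = u t * c"
  using assms by (simp add: dot_on_def if_distrib[of "(*) _"] cong: if_cong)

lemma dot_on_lin_comb:
  "dot_on I u (\<lambda>i. \<Sum>r\<in>R. c r * r i) = (\<Sum>r\<in>R. c r * dot_on I u r)"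
  by (simp add: dot_on_def sum_distrib_left algebra_simps sum.swap[of _ I])

lemma in_frac_span_insertI:
  assumes "finite R" and "r0 \<notin> R" and "D \<noteq> 0"
    and "\<forall>i\<in>I. D * e i = a * r0 i + (\<Sum>r\<in>R. c r * r i)"
  shows "in_frac_span I (insert r0 R) e"
proof -
  have "(\<Sum>r\<in>R. (c(r0 := a)) r * r i) = (\<Sum>r\<in>R. c r * r i)" for i
    using assms(2) by (intro sum.cong) auto
  then show ?thesis
    unfolding in_frac_span_def using assms by (intro exI[of _ D] exI[of _ "c(r0 := a)"]) simp
qed

lemma dot_on_vanishes_on_frac_span:
  assumes "\<forall>i\<in>I. D * e i = (\<Sum>r\<in>R. c r * r i)" and "\<forall>r\<in>R. dot_on I u r = 0"
  shows "D * dot_on I u e = 0"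
proof -
  have "D * dot_on I u e = dot_on I u (\<lambda>i. \<Sum>r\<in>R. c r * r i)"
    unfolding dot_on_scale_right[symmetric] unfolding dot_on_def using assms(1) by (intro sum.cong) auto
  also have "\<dots> = 0"
    unfolding dot_on_lin_comb using assms(2) by (intro sum.neutral) simp
  finally show ?thesis .
qed

lemma not_in_frac_span_eliminate:
  fixes e r0 :: "'i \<Rightarrow> 'a::idom"
  assumes R: "finite R" "r0 \<notin> R" and a: "a \<noteq> 0" and e: "\<not> in_frac_span I (insert r0 R) e"
  shows "\<not> in_frac_span I R (\<lambda>i. a * e i - b * r0 i)"
proof
  assume "in_frac_span I R (\<lambda>i. a * e i - b * r0 i)"
  then obtain D c where D: "D \<noteq> 0" "\<forall>i\<in>I. D * (a * e i - b * r0 i) = (\<Sum>r\<in>R. c r * r i)"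
    unfolding in_frac_span_def by blast
  have "D * a * e i = D * b * r0 i + D * (a * e i - b * r0 i)" for i
    by (simp add: algebra_simps)
  with D(2) have "\<forall>i\<in>I. D * a * e i = D * b * r0 i + (\<Sum>r\<in>R. c r * r i)" by simp
  moreover have "D * a \<noteq> 0" using D(1) a by simp
  ultimately have "in_frac_span I (insert r0 R) e" using in_frac_span_insertI[OF R] by blast
  with e show False ..
qed

lemma separating_functional_insert:
  fixes w u0 :: "'i \<Rightarrow> 'a::idom"
  assumes w: "\<forall>r\<in>R. dot_on I w r = 0" and u0: "\<forall>r\<in>R. dot_on I u0 r = 0"
    and wr0: "dot_on I w r0 \<noteq> 0"
    and u0e: "dot_on I u0 (\<lambda>i. dot_on I w r0 * e i - dot_on I w e * r0 i) \<noteq> 0"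
  shows "\<exists>u. (\<forall>r\<in>insert r0 R. dot_on I u r = 0) \<and> dot_on I u e \<noteq> 0"
proof -
  define u where "u = (\<lambda>i. dot_on I w r0 * u0 i - dot_on I u0 r0 * w i)"
  have uR: "\<forall>r\<in>R. dot_on I u r = 0" and ur0: "dot_on I u r0 = 0"
    using u0 w unfolding u_def dot_on_diff_left by simp_all
  have "dot_on I w r0 * dot_on I u e = dot_on I u (\<lambda>i. dot_on I w r0 * e i - dot_on I w e * r0 i)"
    unfolding dot_on_diff_right ur0 by simp
  also have "\<dots> = dot_on I w r0 * dot_on I u0 (\<lambda>i. dot_on I w r0 * e i - dot_on I w e * r0 i)"
    unfolding u_def dot_on_diff_left unfolding dot_on_diff_right by (simp add: algebra_simps)
  finally have "dot_on I u e \<noteq> 0" using u0e wr0 by auto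
  then show ?thesis using uR ur0 by auto
qed

text \<open>Over the integers this is the Fredholm alternative: a vector outside the rational span of
  finitely many vectors is detected by an integral functional vanishing on all of them.\<close>

lemma separating_functional_if_not_in_frac_span:
  fixes e :: "'i \<Rightarrow> 'a::idom"
  assumes I: "finite I" and R: "finite R" and e: "\<not> in_frac_span I R e"
  shows "\<exists>u. (\<forall>r\<in>R. dot_on I u r = 0) \<and> dot_on I u e \<noteq> 0"
  using R e
proof (induction R arbitrary: e rule: finite_induct)
  case empty
  obtain t where t: "t \<in> I" "e t \<noteq> 0"
  proof (rule ccontr)
    assume "\<not> thesis"
    with that have "in_frac_span I {} e" unfolding in_frac_span_def by (intro exI[of _ 1]) auto
    with empty.prems show False ..
  qed
  then have "dot_on I (\<lambda>i. if i = t then 1 else 0) e \<noteq> 0"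
    using I by (simp add: dot_on_commute[of I _ e] dot_on_single)
  then show ?case by blast
next
  case (insert r0 R)
  show ?case
  proof (cases "in_frac_span I R r0")
    case True
    then obtain D0 c0 where D0: "D0 \<noteq> 0" "\<forall>i\<in>I. D0 * r0 i = (\<Sum>r\<in>R. c0 r * r i)"
      unfolding in_frac_span_def by blast
    have "\<not> in_frac_span I R e"
      using not_in_frac_span_eliminate[OF insert(1,2) _ insert.prems, of 1 0] by simp
    then obtain u where u: "\<forall>r\<in>R. dot_on I u r = 0" "dot_on I u e \<noteq> 0"
      using insert.IH by blast
    then have "dot_on I u r0 = 0" using dot_on_vanishes_on_frac_span[OF D0(2)] D0(1) by simp
    with u show ?thesis by auto
  next
    case False
    then obtain w where w: "\<forall>r\<in>R. dot_on I w r = 0" "dot_on I w r0 \<noteq> 0"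
      using insert.IH by blast
    then show ?thesis
      using insert.IH not_in_frac_span_eliminate[OF insert(1,2) w(2) insert.prems]
        separating_functional_insert[OF w(1) _ w(2)] by blast
  qed
qed

definition laurent_monomial :: "'i set \<Rightarrow> ('i \<Rightarrow> 'k::field) \<Rightarrow> ('i \<Rightarrow> int) \<Rightarrow> 'k" where
  "laurent_monomial I g v = (\<Prod>i\<in>I. g i powi v i)"

lemma power_int_sum:
  "(x::'k::field) \<noteq> 0 \<Longrightarrow> x powi (\<Sum>j\<in>A. f j) = (\<Prod>j\<in>A. x powi f j)"
  by (induction A rule: infinite_finite_induct) (auto simp: power_int_add)

lemma power_int_prod: "(\<Prod>j\<in>A. f j :: 'k::field) powi n = (\<Prod>j\<in>A. f j powi n)"
  by (induction A rule: infinite_finite_induct) (auto simp: power_int_mult_distrib)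

lemma laurent_monomial_add:
  assumes "\<forall>i\<in>I. g i \<noteq> 0"
  shows "laurent_monomial I g (\<lambda>i. v i + w i) = laurent_monomial I g v * laurent_monomial I g w"
  unfolding laurent_monomial_def prod.distrib[symmetric]
  by (rule prod.cong) (use assms in \<open>auto simp: power_int_add\<close>)

lemma laurent_monomial_single:
  assumes "finite I" and "t \<in> I"
  shows "laurent_monomial I g (\<lambda>i. if i = t then c else 0) = g t powi c"
proof -
  have "laurent_monomial I g (\<lambda>i. if i = t then c else 0) = (\<Prod>i\<in>I. if i = t then g t powi c else 1)"
    unfolding laurent_monomial_def by (intro prod.cong) auto
  then show ?thesis using assms by simp
qed

lemma laurent_monomial_lin_comb:
  assumes g: "\<forall>i\<in>I. g i \<noteq> 0"
  shows "laurent_monomial I g (\<lambda>i. \<Sum>r\<in>R. c r * r i) = (\<Prod>r\<in>R. laurent_monomial I g r powi c r)"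
proof -
  have "g i powi (\<Sum>r\<in>R. c r * r i) = (\<Prod>r\<in>R. (g i powi r i) powi c r)" if "i \<in> I" for i
  proof -
    have "g i powi (\<Sum>r\<in>R. c r * r i) = (\<Prod>r\<in>R. g i powi (r i * c r))"
      unfolding power_int_sum[OF g[rule_format, OF that]] by (simp add: mult.commute)
    then show ?thesis by (simp add: power_int_mult)
  qed
  then have "laurent_monomial I g (\<lambda>i. \<Sum>r\<in>R. c r * r i) = (\<Prod>i\<in>I. \<Prod>r\<in>R. (g i powi r i) powi c r)"
    unfolding laurent_monomial_def by (rule prod.cong[OF refl])
  also have "\<dots> = (\<Prod>r\<in>R. laurent_monomial I g r powi c r)"
    unfolding laurent_monomial_def power_int_prod by (rule prod.swap)
  finally show ?thesis .
qed

lemma root_of_unity_if_power_int_eq_1: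
  fixes x :: "'k::field"
  assumes "x powi D = 1" and "D \<noteq> 0"
  shows "\<exists>n>0. x ^ n = 1"
proof -
  have "x powi \<bar>D\<bar> = 1"
    using assms(1) power_int_minus[of x D] by (cases "D \<ge> 0") auto
  then have "x ^ nat \<bar>D\<bar> = 1" by (simp add: power_int_def)
  then show ?thesis using assms(2) by (intro exI[of _ "nat \<bar>D\<bar>"]) auto
qed

lemma root_of_unity_if_in_frac_span:
  fixes g :: "'i \<Rightarrow> 'k::field"
  assumes I: "finite I" and R: "finite R" and g: "\<forall>i\<in>I. g i \<noteq> 0" and t: "t \<in> I"
    and rel: "\<And>r. r \<in> R \<Longrightarrow> laurent_monomial I g r = 1"
    and span: "in_frac_span I R (\<lambda>i. if i = t then 1 else 0)"
  shows "\<exists>n>0. g t ^ n = 1"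
proof -
  obtain D c where D: "D \<noteq> 0" "\<forall>i\<in>I. D * (if i = t then 1 else 0) = (\<Sum>r\<in>R. c r * r i)"
    using span unfolding in_frac_span_def by blast
  have "g t powi D = laurent_monomial I g (\<lambda>i. if i = t then D else 0)"
    by (simp add: laurent_monomial_single[OF I t])
  also have "\<dots> = laurent_monomial I g (\<lambda>i. \<Sum>r\<in>R. c r * r i)"
  proof -
    have "(if i = t then D else 0) = (\<Sum>r\<in>R. c r * r i)" if "i \<in> I" for i
      using D(2) that by (cases "i = t") auto
    then show ?thesis unfolding laurent_monomial_def by (intro prod.cong) auto
  qed
  also have "\<dots> = 1"
    using rel by (simp add: laurent_monomial_lin_comb[OF g])
  finally show ?thesis using D(1) by (rule root_of_unity_if_power_int_eq_1)
qed

section \<open>Eigenvalue pairs of a multiplier preserving the spectrum twice\<close>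

lemma permutation_shifts_vanish:
  fixes x y :: "'i \<Rightarrow> 'a::linordered_idom"
  assumes A: "finite A" and p: "p permutes A" and q: "q permutes A"
    and xp: "\<And>i. i \<in> A \<Longrightarrow> x (p i) = x i + y i"
    and xq: "\<And>i. i \<in> A \<Longrightarrow> x (q i) = x i + 2 * y i"
    and k: "k \<in> A"
  shows "y k = 0"
proof -
  have invariant: "(\<Sum>i\<in>A. (x i + c * y i)\<^sup>2) = (\<Sum>i\<in>A. (x i)\<^sup>2)"
    if "\<sigma> permutes A" "\<And>i. i \<in> A \<Longrightarrow> x (\<sigma> i) = x i + c * y i" for \<sigma> c
  proof -
    have "(\<Sum>i\<in>A. (x i)\<^sup>2) = (\<Sum>i\<in>A. (x (\<sigma> i))\<^sup>2)"
      using sum.permute[OF that(1), of "\<lambda>i. (x i)\<^sup>2"] by simp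
    then show ?thesis using that(2) by simp
  qed
  have expand: "(\<Sum>i\<in>A. (x i + c * y i)\<^sup>2)
      = (\<Sum>i\<in>A. (x i)\<^sup>2) + 2 * c * (\<Sum>i\<in>A. x i * y i) + c\<^sup>2 * (\<Sum>i\<in>A. (y i)\<^sup>2)" for c
    by (simp add: power2_sum sum.distrib sum_distrib_left power_mult_distrib algebra_simps)
  have "(\<Sum>i\<in>A. (y i)\<^sup>2) = 0"
    using invariant[OF p, of 1] invariant[OF q, of 2] xp xq expand[of 1] expand[of 2] by simp
  then have "\<forall>i\<in>A. (y i)\<^sup>2 = 0" by (subst sum_nonneg_eq_0_iff[OF A, symmetric]) auto
  then show ?thesis using k by simp
qed

lemma mset_map_eq_permutation:
  assumes "mset (map f xs) = mset (map g xs)"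
  obtains p where "p permutes {..<length xs}" "\<And>i. i < length xs \<Longrightarrow> g (xs ! p i) = f (xs ! i)"
proof -
  obtain p where p: "p permutes {..<length xs}" "permute_list p (map g xs) = map f xs"
    using mset_eq_permutation[OF assms] by auto
  have "g (xs ! p i) = f (xs ! i)" if "i < length xs" for i
  proof -
    have "permute_list p (map g xs) ! i = map g xs ! p i"
      using p(1) that by (intro permute_list_nth) auto
    then show ?thesis using p that permutes_in_image[OF p(1), of i] by auto
  qed
  with p(1) that show ?thesis by blast
qed

lemma root_of_unity_if_permuted_by_multipliers:
  fixes a b :: "'j \<Rightarrow> 'k::field"
  assumes A: "finite A" and nz: "\<And>i. i \<in> A \<Longrightarrow> a i \<noteq> 0 \<and> b i \<noteq> 0"
    and p: "p permutes A" "\<And>i. i \<in> A \<Longrightarrow> a (p i) = a i * b i"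
    and q: "q permutes A" "\<And>i. i \<in> A \<Longrightarrow> a (q i) = a i * b i ^ 2"
    and k: "k \<in> A"
  shows "\<exists>n>0. b k ^ n = 1"
proof -
  define I where "I = A <+> A"
  define g where "g = case_sum a b"
  have I: "finite I" unfolding I_def using A by simp
  have g: "\<forall>l\<in>I. g l \<noteq> 0" unfolding I_def g_def using nz by auto
  have mem: "Inl i \<in> I" "Inr i \<in> I" "Inl (p i) \<in> I" "Inl (q i) \<in> I" if "i \<in> A" for i
    using that permutes_in_image[OF p(1)] permutes_in_image[OF q(1)] unfolding I_def by auto
  define \<rho> where "\<rho> i = (\<lambda>l. (if l = Inl (p i) then 1 else 0) + (if l = Inl i then - 1 else 0)
    + (if l = Inr i then - 1 else (0::int)))" for i
  define \<rho>' where "\<rho>' i = (\<lambda>l. (if l = Inl (q i) then 1 else 0) + (if l = Inl i then - 1 else 0)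
    + (if l = Inr i then - 2 else (0::int)))" for i
  define R where "R = \<rho> ` A \<union> \<rho>' ` A"
  have R: "finite R" unfolding R_def using A by simp
  have rel: "laurent_monomial I g r = 1" if "r \<in> R" for r
  proof -
    from that obtain i where i: "i \<in> A" "r = \<rho> i \<or> r = \<rho>' i" unfolding R_def by auto
    have "g (Inl i) \<noteq> 0" "g (Inr i) \<noteq> 0" "g (Inl (p i)) = g (Inl i) * g (Inr i)"
      "g (Inl (q i)) = g (Inl i) * g (Inr i) ^ 2"
      using nz[OF i(1)] p(2)[OF i(1)] q(2)[OF i(1)] unfolding g_def by simp_all
    with i show ?thesis
      unfolding \<rho>_def \<rho>'_def
      by (auto simp: laurent_monomial_add[OF g] laurent_monomial_single[OF I] mem[OF i(1)]
          power_int_minus field_simps)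
  qed
  show ?thesis
  proof (cases "in_frac_span I R (\<lambda>l. if l = Inr k then 1 else 0)")
    case True
    then show ?thesis
      using root_of_unity_if_in_frac_span[OF I R g mem(2)[OF k] rel] unfolding g_def by simp
  next
    case False
    then obtain u where u: "\<forall>r\<in>R. dot_on I u r = 0" "dot_on I u (\<lambda>l. if l = Inr k then 1 else 0) \<noteq> 0"
      using separating_functional_if_not_in_frac_span[OF I R] by blast
    have "u (Inl (p i)) = u (Inl i) + u (Inr i)" and "u (Inl (q i)) = u (Inl i) + 2 * u (Inr i)"
      if i: "i \<in> A" for i
    proof -
      have "dot_on I u (\<rho> i) = 0" "dot_on I u (\<rho>' i) = 0" using u(1) i unfolding R_def by auto
      then show "u (Inl (p i)) = u (Inl i) + u (Inr i)" "u (Inl (q i)) = u (Inl i) + 2 * u (Inr i)"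
        unfolding \<rho>_def \<rho>'_def by (simp_all add: dot_on_add_right dot_on_single[OF I] mem[OF i])
    qed
    then have "u (Inr k) = 0"
      using permutation_shifts_vanish[OF A p(1) q(1), of "u \<circ> Inl" "u \<circ> Inr" k] k by simp
    with u(2) show ?thesis by (simp add: dot_on_single[OF I mem(2)[OF k]])
  qed
qed

lemma root_of_unity_if_multiplier_preserves_multiset:
  fixes ps :: "('k::field \<times> 'k) list"
  assumes nz: "\<And>a b. (a, b) \<in> set ps \<Longrightarrow> a \<noteq> 0 \<and> b \<noteq> 0"
    and m1: "mset (map (\<lambda>(a, b). a * b) ps) = mset (map fst ps)"
    and m2: "mset (map (\<lambda>(a, b). a * b ^ 2) ps) = mset (map fst ps)"
    and b: "b \<in> snd ` set ps"
  shows "\<exists>n>0. b ^ n = 1"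
proof -
  obtain p where p: "p permutes {..<length ps}"
    "\<And>i. i < length ps \<Longrightarrow> fst (ps ! p i) = (\<lambda>(a, b). a * b) (ps ! i)"
    using mset_map_eq_permutation[OF m1] by blast
  obtain q where q: "q permutes {..<length ps}"
    "\<And>i. i < length ps \<Longrightarrow> fst (ps ! q i) = (\<lambda>(a, b). a * b ^ 2) (ps ! i)"
    using mset_map_eq_permutation[OF m2] by blast
  obtain k where "k < length ps" "b = snd (ps ! k)"
    using b by (auto simp: in_set_conv_nth)
  moreover have "fst (ps ! i) \<noteq> 0 \<and> snd (ps ! i) \<noteq> 0" if "i < length ps" for i
    using nz[of "fst (ps ! i)" "snd (ps ! i)"] nth_mem[OF that] by simp
  ultimately show ?thesis
    using root_of_unity_if_permuted_by_multipliers[of "{..<length ps}" "\<lambda>i. fst (ps ! i)"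
        "\<lambda>i. snd (ps ! i)" p q k] p q by (auto simp: case_prod_beta)
qed

section \<open>Spectra over the algebraic closure\<close>

lemma proots_linear_factors: "proots (\<Prod>x\<leftarrow>xs. [:- x, 1:]) = mset (xs :: 'a::idom list)"
proof (induction xs)
  case (Cons x xs)
  have "(\<Prod>y\<leftarrow>xs. [:- y, 1:]) \<noteq> (0 :: 'a poly)" by (auto simp: prod_list_zero_iff)
  then show ?case using Cons.IH by (simp add: proots_mult del: mult_pCons_left)
qed simp

lemma det_nonzero_if_invertible_mat:
  fixes T :: "'a::comm_ring_1 mat"
  assumes T: "T \<in> carrier_mat n n" and inv: "invertible_mat T"
  shows "det T \<noteq> 0"
proof -
  obtain T' where T': "T * T' = 1\<^sub>m n" "T' * T = 1\<^sub>m (dim_row T')"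
    using inv T unfolding invertible_mat_def inverts_mat_def by auto
  have "T' \<in> carrier_mat n n"
    using arg_cong[OF T'(1), of dim_col] arg_cong[OF T'(2), of dim_col] T by auto
  then have "det T * det T' = det (1\<^sub>m n)" using det_mult[OF T] T'(1) by metis
  then show ?thesis by auto
qed

lemma eigenvalue_nonzero_if_det_nonzero:
  fixes S :: "'a::field mat"
  assumes S: "S \<in> carrier_mat n n" and "det S \<noteq> 0" and "eigenvalue S e"
  shows "e \<noteq> 0"
proof
  assume "e = 0"
  with assms(3) obtain v where v: "v \<in> carrier_vec n" "v \<noteq> 0\<^sub>v n" "S *\<^sub>v v = 0 \<cdot>\<^sub>v v"
    unfolding eigenvalue_def eigenvector_def using S by auto
  moreover have "0 \<cdot>\<^sub>v v = 0\<^sub>v n" using v(1) by auto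
  ultimately show False using det_0_iff_vec_prod_zero[OF S] assms(2) by auto
qed

lemma root_of_unity_eigenvalue_alg_closed:
  fixes S B :: "'a::alg_closed_field mat"
  assumes S: "S \<in> carrier_mat n n" and B: "B \<in> carrier_mat n n" and comm: "S * B = B * S"
    and dS: "det S \<noteq> 0" and dB: "det B \<noteq> 0"
    and cp1: "char_poly (S * B) = char_poly S" and cp2: "char_poly (S * B ^\<^sub>m 2) = char_poly S"
    and c: "eigenvalue B c"
  shows "\<exists>n>0. c ^ n = 1"
proof -
  obtain ps where ps: "\<And>j k. char_poly (S ^\<^sub>m j * B ^\<^sub>m k) = (\<Prod>(a, b)\<leftarrow>ps. [:- (a ^ j * b ^ k), 1:])"
    using commuting_char_poly_pow_mult[OF S B comm] by blast
  have spec: "proots (char_poly (S ^\<^sub>m j * B ^\<^sub>m k)) = mset (map (\<lambda>(a, b). a ^ j * b ^ k) ps)" for j k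
  proof -
    have "(\<Prod>(a, b)\<leftarrow>ps. [:- (a ^ j * b ^ k), 1:]) = (\<Prod>x\<leftarrow>map (\<lambda>(a, b). a ^ j * b ^ k) ps. [:- x, 1:])"
      by (induction ps) auto
    then show ?thesis by (simp only: ps proots_linear_factors)
  qed
  have roots: "{x. poly (char_poly M) x = 0} = set_mset (proots (char_poly M))"
    if "M \<in> carrier_mat n n" for M :: "'a mat"
    using degree_monic_char_poly[OF that] by (subst set_count_proots) auto
  have sS: "proots (char_poly S) = mset (map fst ps)" and sB: "proots (char_poly B) = mset (map snd ps)"
    using spec[of 1 0] spec[of 0 1] S B by (simp_all add: case_prod_unfold)
  have "mset (map (\<lambda>(a, b). a * b) ps) = mset (map fst ps)"
    using spec[of 1 1] S B cp1 sS by simp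
  moreover have "mset (map (\<lambda>(a, b). a * b ^ 2) ps) = mset (map fst ps)"
    using spec[of 1 2] S B cp2 sS by simp
  moreover have "a \<noteq> 0 \<and> b \<noteq> 0" if "(a, b) \<in> set ps" for a b
  proof -
    have "eigenvalue S a" and "eigenvalue B b"
      using that roots[OF S] roots[OF B] sS sB
        eigenvalue_root_char_poly[OF S] eigenvalue_root_char_poly[OF B]
      by (force intro: rev_image_eqI)+
    then show ?thesis using eigenvalue_nonzero_if_det_nonzero S B dS dB by blast
  qed
  moreover have "c \<in> snd ` set ps"
    using c roots[OF B] sB eigenvalue_root_char_poly[OF B] by auto
  ultimately show ?thesis by (intro root_of_unity_if_multiplier_preserves_multiset) auto
qed

interpretation to_ac_hom: field_hom to_ac by unfold_locales auto

lemma char_poly_to_ac_similar: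
  assumes "similar_mat M M'" and "M \<in> carrier_mat n n" and "M' \<in> carrier_mat n n"
  shows "char_poly (map_mat to_ac M) = char_poly (map_mat to_ac M')"
  using assms to_ac_hom.char_poly_hom char_poly_similar by metis

theorem theorem6p2:
  fixes T A :: "'a :: field mat" and d :: nat
  assumes "d \<ge> 1"
    and "T \<in> carrier_mat d d" and "A \<in> carrier_mat d d"
    and "invertible_mat T" and "invertible_mat A"
    and "T * A = A * T"
    and "similar_mat T (T * A)"
    and "similar_mat T (T * A ^\<^sub>m 2)"
  shows "\<forall>c. eigenvalue (map_mat to_ac A) c \<longrightarrow> (\<exists>n>0. c ^ n = 1)"
proof (intro allI impI)
  fix c assume c: "eigenvalue (map_mat to_ac A) c"
  note T = assms(2) and A = assms(3)
  have hom_TA: "map_mat to_ac (T * A) = map_mat to_ac T * map_mat to_ac A"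
    and hom_AT: "map_mat to_ac (A * T) = map_mat to_ac A * map_mat to_ac T"
    and hom_TA2: "map_mat to_ac (T * A ^\<^sub>m 2) = map_mat to_ac T * map_mat to_ac A ^\<^sub>m 2"
    using to_ac_hom.mat_hom_mult[OF T A] to_ac_hom.mat_hom_mult[OF A T]
      to_ac_hom.mat_hom_mult[OF T pow_carrier_mat[OF A]] to_ac_hom.mat_hom_pow[OF A] by simp_all
  show "\<exists>n>0. c ^ n = 1"
  proof (rule root_of_unity_eigenvalue_alg_closed[OF _ _ _ _ _ _ _ c])
    show "map_mat to_ac T * map_mat to_ac A = map_mat to_ac A * map_mat to_ac T"
      using hom_TA hom_AT assms(6) by metis
    show "char_poly (map_mat to_ac T * map_mat to_ac A) = char_poly (map_mat to_ac T)"
      using char_poly_to_ac_similar[OF assms(7) T] T A hom_TA by simp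
    show "char_poly (map_mat to_ac T * map_mat to_ac A ^\<^sub>m 2) = char_poly (map_mat to_ac T)"
      using char_poly_to_ac_similar[OF assms(8) T] T A hom_TA2 by simp
  qed (use T A det_nonzero_if_invertible_mat[OF T assms(4)] det_nonzero_if_invertible_mat[OF A assms(5)]
      in auto)
qed

end
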